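(* Let $S\subseteq\{1,\dots,p\}$ with $|S|=k$, $\delta\in(0,1]$, $R>0$, $\lambda>0$, $\alpha_1\ge\mu$, $\tau_1>0$. Let $\hat\theta,\tilde\theta\in\mathbb{R}^{p\times q}$ with $\|\hat\theta\|_{1,2}\le R$, $\|\tilde\theta\|_{1,2}\le R$, where all rows of $\hat\theta$ outside $S$ are zero, and put $\tilde\nu=\tilde\theta-\hat\theta$. Suppose there are $\hat z\in\partial\|\hat\theta\|_{1,2}$ and $\tilde z\in\partial\|\tilde\theta\|_{1,2}$ such that $\nabla\bar{\mathcal L}_n(\hat\theta)+\lambda\hat z=0$, $\langle\nabla\bar{\mathcal L}_n(\tilde\theta)+\lambda\tilde z,\hat\theta-\tilde\theta\rangle\ge0$, and $\|\hat z_{S^c}\|_{\infty,2}\le1-\delta$. Suppose also $$\langle\nabla\bar{\mathcal L}_n(\tilde\theta)-\nabla\bar{\mathcal L}_n(\hat\theta),\tilde\nu\rangle\ge(\alpha_1-\mu)\|\tilde\nu\|_F^2-\tau_1\frac{\log p}{n}\|\tilde\nu\|_{1,2}^2$$ and $\lambda\ge\frac{4R\tau_1q\log p}{\delta n}$. Then $$\|\tilde\nu\|_{1,2}\le\Big(\frac4\delta+2\Big)\sqrt k\,\|\tilde\nu\|_F.$$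
   Context: Notation: for $A\in\mathbb{R}^{p\times q}$, $A_{i:}$ row $i$; $A_S$, $A_{S^c}$ the submatrices of rows in $S$, resp. not in $S$; $\|A\|_{a,b}=(\sum_i\|A_{i:}\|_b^a)^{1/a}$ ($a=\infty$: max over $i$); $\|A\|_F$ Frobenius norm; $\langle A,B\rangle=\mathrm{tr}(A^TB)$. $\bar{\mathcal L}_n:\mathbb{R}^{p\times q}\to\mathbb{R}$ is a differentiable function (in the paper, $\bar{\mathcal L}_n(\theta)=\mathcal L_n(\theta)-\sum_i q_\lambda(\|\theta_{i:}\|_2)$ with $\mathcal L_n$ the multi-treatment least-squares loss and $q_\lambda(t)=\lambda|t|-\rho_\lambda(t)$). Subdifferential: $z\in\partial\|\theta\|_{1,2}$ iff $z_{i:}=\theta_{i:}/\|\theta_{i:}\|_2$ when $\theta_{i:}\ne0$ and $\|z_{i:}\|_2\le1$ when $\theta_{i:}=0$. *)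

theory Defs
  imports "HOL-Analysis.Analysis"
begin

text \<open>Matrices in R^{p x q} are rendered as real^'q^'p (rows indexed by 'p,
  p = CARD('p), q = CARD('q)).
  The Frobenius norm is the library norm on real^'q^'p and the trace inner product is
  the library inner product.\<close>

definition norm12 :: "real^'q^'p \<Rightarrow> real" where
  "norm12 A = (\<Sum>i\<in>UNIV. norm (A $ i))"

definition subdiff12 :: "real^'q^'p \<Rightarrow> (real^'q^'p) set" where
  "subdiff12 \<theta> = {z. \<forall>i. (\<theta> $ i \<noteq> 0 \<longrightarrow> z $ i = (1 / norm (\<theta> $ i)) *\<^sub>R (\<theta> $ i))
                        \<and> (\<theta> $ i = 0 \<longrightarrow> norm (z $ i) \<le> 1)}"

end

theory Submission
  imports Defs
begin

text \<open>Write \<open>\<nu> = \<theta>t - \<theta>h\<close> and split \<open>\<parallel>\<nu>\<parallel>\<^sub>1\<^sub>,\<^sub>2 = a + b\<close> into its parts on \<open>S\<close> and off \<open>S\<close>.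
  The stationarity conditions bound \<open>\<langle>G \<theta>t - G \<theta>h, \<nu>\<rangle>\<close> by \<open>lam \<langle>zh - zt, \<nu>\<rangle>\<close>, and
  monotonicity of the subdifferential of each row norm, sharpened off \<open>S\<close> by strict dual
  feasibility, makes this at most \<open>-lam \<delta> b\<close>. Restricted strong convexity then gives
  \<open>lam \<delta> b \<le> \<tau>1 (log p / n) \<parallel>\<nu>\<parallel>\<^sub>1\<^sub>,\<^sub>2\<^sup>2 \<le> 2 R \<tau>1 (log p / n) \<parallel>\<nu>\<parallel>\<^sub>1\<^sub>,\<^sub>2\<close>, and the choice of
  \<open>lam\<close> forces \<open>b \<le> \<parallel>\<nu>\<parallel>\<^sub>1\<^sub>,\<^sub>2 / 2\<close>, i.e. \<open>\<parallel>\<nu>\<parallel>\<^sub>1\<^sub>,\<^sub>2 \<le> 2 a \<le> 2 \<surd>k \<parallel>\<nu>\<parallel>\<^sub>F\<close> by Cauchy-Schwarz.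
  This is stronger than the claimed bound.\<close>

lemma subgradient_norm_monotone:
  fixes x y u v :: "'a::real_inner"
  assumes "u \<bullet> x = norm x" "norm u \<le> 1" "v \<bullet> y = norm y" "norm v \<le> 1"
  shows "(u - v) \<bullet> (y - x) \<le> 0"
proof -
  have "u \<bullet> y \<le> norm y" "v \<bullet> x \<le> norm x"
    using norm_cauchy_schwarz[of u y] norm_cauchy_schwarz[of v x]
      mult_right_mono[OF assms(2) norm_ge_zero[of y]] mult_right_mono[OF assms(4) norm_ge_zero[of x]]
    by linarith+
  then show ?thesis
    using assms(1,3) by (simp add: inner_diff_left inner_diff_right)
qed

lemma subgradient_norm_strict_at_zero:
  fixes y u v :: "'a::real_inner"
  assumes "norm u \<le> 1 - \<delta>" "v \<bullet> y = norm y"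
  shows "(u - v) \<bullet> y \<le> - \<delta> * norm y"
proof -
  have "u \<bullet> y \<le> (1 - \<delta>) * norm y"
    using norm_cauchy_schwarz[of u y] mult_right_mono[OF assms(1) norm_ge_zero[of y]] by linarith
  then show ?thesis
    using assms(2) by (simp add: inner_diff_left algebra_simps)
qed

lemma subdiff12_row:
  assumes "z \<in> subdiff12 \<theta>"
  shows "z $ i \<bullet> \<theta> $ i = norm (\<theta> $ i)" "norm (z $ i) \<le> 1"
  using assms unfolding subdiff12_def
  by (cases "\<theta> $ i = 0"; auto simp: dot_square_norm power2_eq_square)+

lemma subdiff12_inner_diff_le:
  fixes \<theta>h \<theta>t zh zt :: "real^'q^'p"
  assumes zh: "zh \<in> subdiff12 \<theta>h" and zt: "zt \<in> subdiff12 \<theta>t"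
    and supp: "\<And>i. i \<notin> S \<Longrightarrow> \<theta>h $ i = 0"
    and dual: "\<And>i. i \<notin> S \<Longrightarrow> norm (zh $ i) \<le> 1 - \<delta>"
  shows "(zh - zt) \<bullet> (\<theta>t - \<theta>h) \<le> - \<delta> * (\<Sum>i\<in>-S. norm ((\<theta>t - \<theta>h) $ i))"
proof -
  have row: "(zh $ i - zt $ i) \<bullet> (\<theta>t $ i - \<theta>h $ i)
      \<le> (if i \<in> S then 0 else - \<delta> * norm (\<theta>t $ i - \<theta>h $ i))" for i
    using subgradient_norm_monotone[OF subdiff12_row[OF zh] subdiff12_row[OF zt]]
      subgradient_norm_strict_at_zero[OF dual subdiff12_row(1)[OF zt]] supp
    by auto
  have "(zh - zt) \<bullet> (\<theta>t - \<theta>h) = (\<Sum>i\<in>UNIV. (zh $ i - zt $ i) \<bullet> (\<theta>t $ i - \<theta>h $ i))"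
    by (simp add: inner_vec_def)
  also have "\<dots> \<le> (\<Sum>i\<in>UNIV. if i \<in> S then 0 else - \<delta> * norm (\<theta>t $ i - \<theta>h $ i))"
    by (rule sum_mono) (rule row)
  also have "\<dots> = - \<delta> * (\<Sum>i\<in>-S. norm ((\<theta>t - \<theta>h) $ i))"
    by (simp add: sum.If_cases sum_distrib_left Compl_eq_Diff_UNIV)
  finally show ?thesis .
qed

lemma norm12_split:
  "norm12 A = (\<Sum>i\<in>S. norm (A $ i)) + (\<Sum>i\<in>-S. norm (A $ i))"
  unfolding norm12_def
  using sum.subset_diff[of S UNIV "\<lambda>i. norm (A $ i)"] by (simp add: Compl_eq_Diff_UNIV)

lemma norm12_nonneg: "0 \<le> norm12 A"
  unfolding norm12_def by (simp add: sum_nonneg)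

lemma norm12_diff_le: "norm12 (A - B) \<le> norm12 A + norm12 B"
  unfolding norm12_def sum.distrib[symmetric]
  by (rule sum_mono) (simp add: norm_triangle_ineq4)

lemma sum_row_norms_le_sqrt_card:
  fixes A :: "real^'q^'p"
  shows "(\<Sum>i\<in>S. norm (A $ i)) \<le> sqrt (real (card S)) * norm A"
proof -
  have "(\<Sum>i\<in>S. norm (A $ i)) \<le> L2_set (\<lambda>i. norm (A $ i)) S * L2_set (\<lambda>i. 1::real) S"
    using L2_set_mult_ineq[of "\<lambda>i. norm (A $ i)" "\<lambda>i. 1" S] by simp
  also have "L2_set (\<lambda>i. norm (A $ i)) S \<le> norm A"
    unfolding norm_vec_def L2_set_def by (rule real_sqrt_le_mono, rule sum_mono2) auto
  finally show ?thesis
    by (simp add: L2_set_constant mult_right_mono mult.commute)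
qed

lemma le_half_of_quadratic_bound:
  fixes b N c R \<kappa> :: real
  assumes "\<kappa> * b \<le> c * N\<^sup>2" "\<kappa> > 0" "4 * R * c \<le> \<kappa>" "0 \<le> c" "0 \<le> N" "N \<le> 2 * R"
  shows "b \<le> N / 2"
proof -
  have "c * N\<^sup>2 \<le> (2 * R * c) * N"
    using mult_left_mono[OF mult_right_mono[OF assms(6,5)] assms(4)]
    by (simp add: power2_eq_square algebra_simps)
  also have "\<dots> \<le> (\<kappa> / 2) * N"
    using assms(3,5) by (intro mult_right_mono) auto
  finally have "\<kappa> * b \<le> \<kappa> * (N / 2)"
    using assms(1) by simp
  then show ?thesis
    using assms(2) by simp
qed

theorem lemma10:
  fixes L :: "real^'q^'p \<Rightarrow> real"
    and G :: "real^'q^'p \<Rightarrow> real^'q^'p"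
    and S :: "'p set"
    and \<theta>h \<theta>t zh zt :: "real^'q^'p"
    and \<delta> R lam \<alpha>1 \<mu> \<tau>1 :: real
    and n :: nat
  assumes grad: "\<And>\<theta>. (L has_derivative (\<lambda>h. G \<theta> \<bullet> h)) (at \<theta>)"
    and n_pos: "n > 0"
    and \<delta>: "0 < \<delta>" "\<delta> \<le> 1"
    and R: "R > 0" and lam_pos: "lam > 0" and alpha: "\<alpha>1 \<ge> \<mu>" and tau: "\<tau>1 > 0"
    and bh: "norm12 \<theta>h \<le> R" and bt: "norm12 \<theta>t \<le> R"
    and supp: "\<And>i. i \<notin> S \<Longrightarrow> \<theta>h $ i = 0"
    and zh: "zh \<in> subdiff12 \<theta>h" and zt: "zt \<in> subdiff12 \<theta>t"
    and stat_h: "G \<theta>h + lam *\<^sub>R zh = 0"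
    and stat_t: "(G \<theta>t + lam *\<^sub>R zt) \<bullet> (\<theta>h - \<theta>t) \<ge> 0"
    and dual: "\<And>i. i \<notin> S \<Longrightarrow> norm (zh $ i) \<le> 1 - \<delta>"
    and rsc: "(G \<theta>t - G \<theta>h) \<bullet> (\<theta>t - \<theta>h) \<ge>
               (\<alpha>1 - \<mu>) * (norm (\<theta>t - \<theta>h))\<^sup>2
               - \<tau>1 * (ln (real CARD('p)) / real n) * (norm12 (\<theta>t - \<theta>h))\<^sup>2"
    and lam_lb: "lam \<ge> 4 * R * \<tau>1 * real CARD('q) * ln (real CARD('p)) / (\<delta> * real n)"
  shows "norm12 (\<theta>t - \<theta>h) \<le> (4 / \<delta> + 2) * sqrt (real (card S)) * norm (\<theta>t - \<theta>h)"
proof -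
  define \<nu> where "\<nu> = \<theta>t - \<theta>h"
  define c where "c = \<tau>1 * (ln (real CARD('p)) / real n)"
  define b where "b = (\<Sum>i\<in>-S. norm (\<nu> $ i))"
  have c_nonneg: "0 \<le> c"
    unfolding c_def using tau by simp
  have "(G \<theta>t - G \<theta>h) \<bullet> \<nu> \<le> lam * ((zh - zt) \<bullet> \<nu>)"
    using stat_t stat_h[unfolded add_eq_0_iff2]
    by (simp add: \<nu>_def inner_diff_left inner_diff_right inner_add_left algebra_simps)
  also have "\<dots> \<le> lam * (- \<delta> * b)"
    using mult_left_mono[OF subdiff12_inner_diff_le[where S = S, OF zh zt supp dual]] lam_pos
    by (simp add: \<nu>_def b_def)
  also have "\<dots> = - (lam * \<delta> * b)"
    by simp
  finally have "lam * \<delta> * b \<le> c * (norm12 \<nu>)\<^sup>2"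
    using rsc mult_nonneg_nonneg[OF _ zero_le_power2, of "\<alpha>1 - \<mu>" "norm \<nu>"] alpha
    unfolding \<nu>_def c_def by linarith
  moreover have "4 * R * c \<le> lam * \<delta>"
  proof -
    have "4 * R * c \<le> 4 * R * c * real CARD('q)"
      using R c_nonneg mult_left_mono[of 1 "real CARD('q)" c] by simp
    also have "\<dots> \<le> lam * \<delta>"
      using mult_right_mono[OF lam_lb, of \<delta>] \<delta> n_pos by (simp add: c_def field_simps)
    finally show ?thesis .
  qed
  moreover have "norm12 \<nu> \<le> 2 * R"
    using norm12_diff_le[of \<theta>t \<theta>h] bh bt by (simp add: \<nu>_def)
  ultimately have "b \<le> norm12 \<nu> / 2"
    using le_half_of_quadratic_bound lam_pos \<delta> c_nonneg norm12_nonneg[of \<nu>] by simp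
  then have "norm12 \<nu> \<le> 2 * sqrt (real (card S)) * norm \<nu>"
    using norm12_split[of \<nu> S] sum_row_norms_le_sqrt_card[of \<nu> S] by (simp add: b_def)
  also have "\<dots> \<le> (4 / \<delta> + 2) * sqrt (real (card S)) * norm \<nu>"
    using \<delta> by (intro mult_right_mono) auto
  finally show ?thesis
    unfolding \<nu>_def .
qed

end
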